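(* Let $(X,D)$ be a JS-metric space with a partial order $\le$, and let $F:X^2\to X$ have the mixed monotone property and satisfy, for some $k\in[0,1)$, $D(F(x,y),F(u,v))\le \frac{k}{2}(D(x,u)+D(y,v))$ for all $x\ge u$, $y\le v$. Suppose $(x,y)$ and $(x^*,y^* )$ are coupled fixed points of $F$ that are incomparable in $X^2$, and there exists $(z_1,z_2)\in X^2$ which is an upper bound or a lower bound (in $X^2$) of both $(x,y)$ and $(x^*,y^* )$, with $D(x,z_1),D(y,z_2),D(x^*,z_1),D(y^*,z_2)<\infty$. Then $x=x^*$ and $y=y^*$.
   Context: Arithmetic is carried out in the extended reals. $(X,D)$ is a JS-metric space: $D:X\times X\to[0,\infty]$ satisfies (D1) $D(x,y)=0\Rightarrow x=y$; (D2) $D(x,y)=D(y,x)$; (D3) there exists $c>0$ such that for all $x,y\in X$ and every sequence $(x_n)$ with $\lim_n D(x_n,x)=0$, $D(x,y)\le c\limsup_n D(x_n,y)$. $F$ has the mixed monotone property if $x_1\le x_2\Rightarrow F(x_1,y)\le F(x_2,y)$ and $y_1\le y_2\Rightarrow F(x,y_1)\ge F(x,y_2)$. A coupled fixed point is $(x,y)$ with $x=F(x,y)$, $y=F(y,x)$. The partial order on $X^2$ is $(u,v)\le(x,y)\iff u\le x$ and $v\ge y$; two elements are comparable if one is $\le$ the other. *)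

theory Defs
  imports "HOL-Analysis.Analysis"
begin

text \<open>JS-metric (Jleli--Samet generalized metric) with values in [0,\<infinity>],
  modelled as extended reals that are nonnegative.\<close>
definition js_metric :: "('a \<Rightarrow> 'a \<Rightarrow> ereal) \<Rightarrow> bool" where
  "js_metric D \<longleftrightarrow>
     (\<forall>x y. 0 \<le> D x y) \<and>
     (\<forall>x y. D x y = 0 \<longrightarrow> x = y) \<and>
     (\<forall>x y. D x y = D y x) \<and>
     (\<exists>c::real. c > 0 \<and> (\<forall>x y (s::nat \<Rightarrow> 'a).
         ((\<lambda>n. D (s n) x) \<longlonglongrightarrow> 0) \<longrightarrow>
         D x y \<le> ereal c * limsup (\<lambda>n. D (s n) y)))"

definition partial_order_rel :: "('a \<Rightarrow> 'a \<Rightarrow> bool) \<Rightarrow> bool" where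
  "partial_order_rel le \<longleftrightarrow>
     (\<forall>x. le x x) \<and> (\<forall>x y. le x y \<and> le y x \<longrightarrow> x = y) \<and>
     (\<forall>x y z. le x y \<and> le y z \<longrightarrow> le x z)"

definition mixed_monotone :: "('a \<Rightarrow> 'a \<Rightarrow> bool) \<Rightarrow> ('a \<Rightarrow> 'a \<Rightarrow> 'a) \<Rightarrow> bool" where
  "mixed_monotone le F \<longleftrightarrow>
     (\<forall>x1 x2 y. le x1 x2 \<longrightarrow> le (F x1 y) (F x2 y)) \<and>
     (\<forall>x y1 y2. le y1 y2 \<longrightarrow> le (F x y2) (F x y1))"

definition coupled_fixed_point :: "('a \<Rightarrow> 'a \<Rightarrow> 'a) \<Rightarrow> 'a \<Rightarrow> 'a \<Rightarrow> bool" where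
  "coupled_fixed_point F x y \<longleftrightarrow> x = F x y \<and> y = F y x"

definition prod_le :: "('a \<Rightarrow> 'a \<Rightarrow> bool) \<Rightarrow> 'a \<times> 'a \<Rightarrow> 'a \<times> 'a \<Rightarrow> bool" where
  "prod_le le p q \<longleftrightarrow> le (fst p) (fst q) \<and> le (snd q) (snd p)"

definition prod_comparable :: "('a \<Rightarrow> 'a \<Rightarrow> bool) \<Rightarrow> 'a \<times> 'a \<Rightarrow> 'a \<times> 'a \<Rightarrow> bool" where
  "prod_comparable le p q \<longleftrightarrow> prod_le le p q \<or> prod_le le q p"

end

theory Submission
  imports Defs
begin

text \<open>Iterate \<open>(a, b) \<mapsto> (F a b, F b a)\<close> from the common bound \<open>(z1, z2)\<close>. By mixed
  monotonicity the iterates stay comparable with both coupled fixed points, and on comparable pairs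
  this map contracts the sum distance \<open>D a a' + D b b'\<close> by the factor \<open>k\<close>. As the bound is at
  finite distance from both fixed points, the iterates converge to each of them, and limits in a
  JS-metric space are unique.\<close>

definition coupled_map :: "('a \<Rightarrow> 'a \<Rightarrow> 'a) \<Rightarrow> 'a \<times> 'a \<Rightarrow> 'a \<times> 'a" where
  "coupled_map F p = (F (fst p) (snd p), F (snd p) (fst p))"

definition pair_dist :: "('a \<Rightarrow> 'a \<Rightarrow> ereal) \<Rightarrow> 'a \<times> 'a \<Rightarrow> 'a \<times> 'a \<Rightarrow> ereal" where
  "pair_dist D p q = D (fst p) (fst q) + D (snd p) (snd q)"

lemma
  assumes "js_metric D"
  shows js_metric_nonneg: "0 \<le> D x y"
    and js_metric_eq_0: "D x y = 0 \<Longrightarrow> x = y"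
    and js_metric_sym: "D x y = D y x"
proof -
  note js = assms[unfolded js_metric_def]
  show "0 \<le> D x y"
    using conjunct1[OF js] by blast
  show "D x y = 0 \<Longrightarrow> x = y"
    using conjunct1[OF conjunct2[OF js]] by blast
  show "D x y = D y x"
    using conjunct1[OF conjunct2[OF conjunct2[OF js]]] by blast
qed

lemma js_metric_limit_unique:
  assumes js: "js_metric D"
    and to_x: "(\<lambda>n. D (s n) x) \<longlonglongrightarrow> 0" and to_y: "(\<lambda>n. D (s n) y) \<longlonglongrightarrow> 0"
  shows "x = y"
proof -
  obtain c :: real where c: "\<And>x y (s :: nat \<Rightarrow> _). (\<lambda>n. D (s n) x) \<longlonglongrightarrow> 0 \<Longrightarrow>
      D x y \<le> ereal c * limsup (\<lambda>n. D (s n) y)"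
    using conjunct2[OF conjunct2[OF conjunct2[OF js[unfolded js_metric_def]]]] by blast
  have "D x y \<le> ereal c * limsup (\<lambda>n. D (s n) y)"
    using c[OF to_x] .
  also have "limsup (\<lambda>n. D (s n) y) = 0"
    using lim_imp_Limsup[OF _ to_y] by simp
  finally have "D x y = 0"
    using js_metric_nonneg[OF js, of x y] by simp
  then show ?thesis
    by (rule js_metric_eq_0[OF js])
qed

lemma pair_dist_sym: "js_metric D \<Longrightarrow> pair_dist D p q = pair_dist D q p"
  by (simp add: pair_dist_def js_metric_sym[of D "fst p"] js_metric_sym[of D "snd p"])

lemma pair_dist_nonneg: "js_metric D \<Longrightarrow> 0 \<le> pair_dist D p q"
  by (simp add: pair_dist_def js_metric_nonneg)

lemma fst_le_pair_dist: "js_metric D \<Longrightarrow> D (fst p) (fst q) \<le> pair_dist D p q"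
  by (simp add: pair_dist_def js_metric_nonneg add_increasing2)

lemma snd_le_pair_dist: "js_metric D \<Longrightarrow> D (snd p) (snd q) \<le> pair_dist D p q"
  by (simp add: pair_dist_def js_metric_nonneg add_increasing)

lemma coupled_fixed_point_iff: "coupled_fixed_point F x y \<longleftrightarrow> coupled_map F (x, y) = (x, y)"
  by (auto simp: coupled_fixed_point_def coupled_map_def)

lemma prod_le_coupled_map:
  assumes po: "partial_order_rel le" and mm: "mixed_monotone le F"
    and "prod_le le p q"
  shows "prod_le le (coupled_map F p) (coupled_map F q)"
proof -
  have trans: "\<And>u v w. le u v \<Longrightarrow> le v w \<Longrightarrow> le u w"
    using po unfolding partial_order_rel_def by blast
  have mono1: "\<And>x1 x2 y. le x1 x2 \<Longrightarrow> le (F x1 y) (F x2 y)"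
    and anti2: "\<And>x y1 y2. le y1 y2 \<Longrightarrow> le (F x y2) (F x y1)"
    using mm unfolding mixed_monotone_def by blast+
  have fst_le: "le (fst p) (fst q)" and snd_ge: "le (snd q) (snd p)"
    using \<open>prod_le le p q\<close> by (auto simp: prod_le_def)
  have "le (F (fst p) (snd p)) (F (fst q) (snd q))"
    using trans[OF mono1[OF fst_le] anti2[OF snd_ge]] .
  moreover have "le (F (snd q) (fst q)) (F (snd p) (fst p))"
    using trans[OF mono1[OF snd_ge] anti2[OF fst_le]] .
  ultimately show ?thesis
    by (simp add: prod_le_def coupled_map_def)
qed

lemma prod_comparable_funpow_coupled_map:
  assumes po: "partial_order_rel le" and mm: "mixed_monotone le F"
    and fixed: "coupled_map F p = p" and "prod_comparable le z p"
  shows "prod_comparable le ((coupled_map F ^^ n) z) p"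
proof (induction n)
  case 0
  then show ?case using \<open>prod_comparable le z p\<close> by simp
next
  case (Suc n)
  let ?w = "(coupled_map F ^^ n) z"
  have "prod_le le (coupled_map F ?w) (coupled_map F p) \<or> prod_le le (coupled_map F p) (coupled_map F ?w)"
    using Suc.IH prod_le_coupled_map[OF po mm] unfolding prod_comparable_def by blast
  then show ?case
    unfolding prod_comparable_def fixed by simp
qed

lemma pair_dist_coupled_map_le:
  assumes js: "js_metric D" and k: "0 \<le> k"
    and contr: "\<And>x y u v. le u x \<Longrightarrow> le y v \<Longrightarrow>
           D (F x y) (F u v) \<le> ereal (k / 2) * (D x u + D y v)"
    and comp: "prod_comparable le p q"
  shows "pair_dist D (coupled_map F p) (coupled_map F q) \<le> ereal k * pair_dist D p q"
proof -
  have below: "pair_dist D (coupled_map F b) (coupled_map F a) \<le> ereal k * pair_dist D b a"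
    if "prod_le le a b" for a b
  proof -
    have le_fst: "le (fst a) (fst b)" and le_snd: "le (snd b) (snd a)"
      using that by (auto simp: prod_le_def)
    have "pair_dist D (coupled_map F b) (coupled_map F a)
        = D (F (fst b) (snd b)) (F (fst a) (snd a)) + D (F (snd a) (fst a)) (F (snd b) (fst b))"
      by (simp add: pair_dist_def coupled_map_def js_metric_sym[OF js, of "F (snd b) (fst b)"])
    also have "\<dots> \<le> ereal (k / 2) * pair_dist D b a + ereal (k / 2) * pair_dist D b a"
      using add_mono[OF contr[OF le_fst le_snd] contr[OF le_snd le_fst]]
      by (simp add: pair_dist_def js_metric_sym[OF js, of "snd a"]
          js_metric_sym[OF js, of "fst a"] add.commute)
    also have "\<dots> = ereal k * pair_dist D b a"
      using k pair_dist_nonneg[OF js]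
      by (simp flip: ereal_left_distrib)
    finally show ?thesis .
  qed
  show ?thesis
    using comp below[of p q] below[of q p] pair_dist_sym[OF js]
    by (auto simp: prod_comparable_def)
qed

lemma ereal_tendsto_zero_dominated:
  fixes f g :: "nat \<Rightarrow> ereal"
  assumes "\<And>n. 0 \<le> f n" and "\<And>n. f n \<le> g n" and "g \<longlonglongrightarrow> 0"
  shows "f \<longlonglongrightarrow> 0"
  using tendsto_sandwich[of "\<lambda>_. 0" f sequentially g 0] assms by simp

lemma ereal_geometric_decay_tendsto_zero:
  fixes d :: "nat \<Rightarrow> ereal"
  assumes k: "0 \<le> k" "k < 1"
    and nonneg: "\<And>n. 0 \<le> d n" and decay: "\<And>n. d (Suc n) \<le> ereal k * d n"
    and finite: "d 0 \<noteq> \<infinity>"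
  shows "d \<longlonglongrightarrow> 0"
proof -
  obtain r where r: "d 0 = ereal r"
    using finite nonneg[of 0] by (cases "d 0") auto
  have bound: "d n \<le> ereal (k ^ n * r)" for n
  proof (induction n)
    case 0
    then show ?case using r by simp
  next
    case (Suc n)
    have "d (Suc n) \<le> ereal k * d n" by (rule decay)
    also have "\<dots> \<le> ereal k * ereal (k ^ n * r)"
      using Suc k by (intro ereal_mult_left_mono) auto
    finally show ?case by (simp add: mult.assoc)
  qed
  have "(\<lambda>n. k ^ n * r) \<longlonglongrightarrow> 0"
    using k by (intro tendsto_mult_left_zero LIMSEQ_power_zero) auto
  then have "(\<lambda>n. ereal (k ^ n * r)) \<longlonglongrightarrow> 0"
    by (simp add: zero_ereal_def tendsto_ereal)
  then show ?thesis
    by (rule ereal_tendsto_zero_dominated[OF nonneg bound])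
qed

lemma coupled_iterates_tendsto_fixed_point:
  assumes js: "js_metric D" and k: "0 \<le> k" "k < 1"
    and contr: "\<And>x y u v. le u x \<Longrightarrow> le y v \<Longrightarrow>
           D (F x y) (F u v) \<le> ereal (k / 2) * (D x u + D y v)"
    and fixed: "coupled_map F p = p"
    and comp: "\<And>n. prod_comparable le ((coupled_map F ^^ n) z) p"
    and finite: "pair_dist D p z < \<infinity>"
  shows "(\<lambda>n. D (fst ((coupled_map F ^^ n) z)) (fst p)) \<longlonglongrightarrow> 0"
    and "(\<lambda>n. D (snd ((coupled_map F ^^ n) z)) (snd p)) \<longlonglongrightarrow> 0"
proof -
  define d where "d n = pair_dist D ((coupled_map F ^^ n) z) p" for n
  have d_lim: "d \<longlonglongrightarrow> 0"
  proof (rule ereal_geometric_decay_tendsto_zero[OF k])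
    show "0 \<le> d n" for n
      by (simp add: d_def pair_dist_nonneg[OF js])
    show "d (Suc n) \<le> ereal k * d n" for n
      using pair_dist_coupled_map_le[OF js k(1) contr comp[of n]] fixed by (simp add: d_def)
    show "d 0 \<noteq> \<infinity>"
      using finite pair_dist_sym[OF js] by (simp add: d_def)
  qed
  show "(\<lambda>n. D (fst ((coupled_map F ^^ n) z)) (fst p)) \<longlonglongrightarrow> 0"
    by (rule ereal_tendsto_zero_dominated[OF _ _ d_lim])
      (simp_all add: d_def js_metric_nonneg[OF js] fst_le_pair_dist[OF js])
  show "(\<lambda>n. D (snd ((coupled_map F ^^ n) z)) (snd p)) \<longlonglongrightarrow> 0"
    by (rule ereal_tendsto_zero_dominated[OF _ _ d_lim])
      (simp_all add: d_def js_metric_nonneg[OF js] snd_le_pair_dist[OF js])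
qed

theorem mainTheorem7:
  fixes D :: "'a \<Rightarrow> 'a \<Rightarrow> ereal"
    and le :: "'a \<Rightarrow> 'a \<Rightarrow> bool"
    and F :: "'a \<Rightarrow> 'a \<Rightarrow> 'a"
    and k :: real
    and x y xs ys z1 z2 :: 'a
  assumes "js_metric D"
    and "partial_order_rel le"
    and "mixed_monotone le F"
    and "0 \<le> k" and "k < 1"
    and "\<And>x y u v. le u x \<Longrightarrow> le y v \<Longrightarrow>
           D (F x y) (F u v) \<le> ereal (k / 2) * (D x u + D y v)"
    and "coupled_fixed_point F x y"
    and "coupled_fixed_point F xs ys"
    and "\<not> prod_comparable le (x, y) (xs, ys)"
    and "(prod_le le (x, y) (z1, z2) \<and> prod_le le (xs, ys) (z1, z2)) \<or>
         (prod_le le (z1, z2) (x, y) \<and> prod_le le (z1, z2) (xs, ys))"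
    and "D x z1 < \<infinity>" and "D y z2 < \<infinity>"
    and "D xs z1 < \<infinity>" and "D ys z2 < \<infinity>"
  shows "x = xs \<and> y = ys"
proof -
  have fixed: "coupled_map F (x, y) = (x, y)" "coupled_map F (xs, ys) = (xs, ys)"
    using assms(7,8) by (simp_all add: coupled_fixed_point_iff)
  have "prod_comparable le (z1, z2) (x, y)" "prod_comparable le (z1, z2) (xs, ys)"
    using assms(10) by (auto simp: prod_comparable_def)
  then have comp: "\<And>n. prod_comparable le ((coupled_map F ^^ n) (z1, z2)) (x, y)"
    "\<And>n. prod_comparable le ((coupled_map F ^^ n) (z1, z2)) (xs, ys)"
    using prod_comparable_funpow_coupled_map[OF assms(2,3)] fixed by blast+
  have finite: "pair_dist D (x, y) (z1, z2) < \<infinity>" "pair_dist D (xs, ys) (z1, z2) < \<infinity>"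
    using assms(11-14) by (simp_all add: pair_dist_def)
  note to_xy = coupled_iterates_tendsto_fixed_point[OF assms(1,4,5,6) fixed(1) comp(1) finite(1)]
  note to_xsys = coupled_iterates_tendsto_fixed_point[OF assms(1,4,5,6) fixed(2) comp(2) finite(2)]
  show ?thesis
    using js_metric_limit_unique[OF assms(1) to_xy(1) to_xsys(1)]
      js_metric_limit_unique[OF assms(1) to_xy(2) to_xsys(2)] by simp
qed

end
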